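(* Let $\{X(t):\, t\in\mathbb{R}^d\}$ be a stationary centered Gaussian random field with unit variance and covariance function $\rho$ satisfying $\int_{\mathbb{R}^d}|\rho(t)|\,dt<\infty$, and suppose there exist $\alpha\in(0,2]$ and $c>0$ with $1-\rho(t)\cong c\|t\|^\alpha$ as $t\to0$. Fix $\epsilon>0$ and let $B(u)\cong\int_{[-\epsilon,\epsilon]^d}\int_0^{\rho(t)}\varphi(u,u,y)\,dy\,dt$ as $u\to\infty$. Then for every $\delta\in(0,1)$, $$\limsup_{u\to\infty}\frac{B(u)}{2\left(\frac{2}{2-\delta}\right)^{1/2}\frac{\varphi(u)}{u}\int_{[-\epsilon,\epsilon]^d}\overline{\Phi}\left(u\left[\frac{1-\rho(t)}{2}\right]^{1/2}\right)dt}\le 1$$ and $$\liminf_{u\to\infty}\frac{B(u)}{[2(2-\delta)]^{1/2}\frac{\varphi(u)}{u}\int_{[-\epsilon,\epsilon]^d}\overline{\Phi}\left(u\left[\frac{1-\rho(t)}{2-\delta}\right]^{1/2}\right)dt}\ge 1 .$$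
   Context: $\varphi$ is the standard Gaussian density and $\overline{\Phi}(x)=\int_x^\infty\varphi(s)\,ds$ its tail. $\varphi(u,u,y)=\frac{1}{2\pi\sqrt{1-y^2}}\exp\left(\frac{-u^2}{1+y}\right)$ is the density at $(u,u)$ of the bivariate centered normal vector with unit variances and correlation $y$. $f\cong g$ means the ratio $f/g$ tends to $1$; $\|\cdot\|$ is the Euclidean norm. *)

theory Defs
  imports "HOL-Probability.Probability" "HOL-Library.Landau_Symbols"
begin

definition std_phi :: "real \<Rightarrow> real" where
  "std_phi x = exp (- (x\<^sup>2) / 2) / sqrt (2 * pi)"

definition Phi_bar :: "real \<Rightarrow> real" where
  "Phi_bar x = (LINT s:{x..}|lborel. std_phi s)"

text \<open>Density at (u,u) of the centered bivariate normal with unit variances, correlation y.\<close>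
definition phi2 :: "real \<Rightarrow> real \<Rightarrow> real" where
  "phi2 u y = exp (- (u\<^sup>2) / (1 + y)) / (2 * pi * sqrt (1 - y\<^sup>2))"

definition gaussian_rv :: "'w measure \<Rightarrow> ('w \<Rightarrow> real) \<Rightarrow> bool" where
  "gaussian_rv M Y \<longleftrightarrow>
     (\<exists>\<mu> \<sigma>. 0 < \<sigma> \<and> distributed M lborel Y (normal_density \<mu> \<sigma>)) \<or>
     (Y \<in> borel_measurable M \<and> (\<exists>c. AE \<omega> in M. Y \<omega> = c))"

definition stationary_gaussian_field ::
  "'w measure \<Rightarrow> ('d::euclidean_space \<Rightarrow> 'w \<Rightarrow> real) \<Rightarrow> ('d \<Rightarrow> real) \<Rightarrow> bool" where
  "stationary_gaussian_field M X \<rho> \<longleftrightarrow>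
     prob_space M \<and>
     (\<forall>S a. finite S \<longrightarrow> gaussian_rv M (\<lambda>\<omega>. \<Sum>t\<in>S. a t * X t \<omega>)) \<and>
     (\<forall>t. integral\<^sup>L M (X t) = 0) \<and>
     (\<forall>t. integral\<^sup>L M (\<lambda>\<omega>. (X t \<omega>)\<^sup>2) = 1) \<and>
     (\<forall>s t. integral\<^sup>L M (\<lambda>\<omega>. X s \<omega> * X t \<omega>) = \<rho> (s - t))"

end

theory Submission
  imports Defs "HOL-Real_Asymp.Real_Asymp"
begin

text \<open>Since \<open>u\<^sup>2/2 + u\<^sup>2(1-y)/(2(1+y)) = u\<^sup>2/(1+y)\<close>, the density \<open>\<phi>(u,u,y)\<close> equals
  \<open>(1+y) \<phi>(u)/u\<close> times the \<open>y\<close>-derivative of \<open>\<Phi>\<^sup>-(u \<surd>((1-y)/(1+y)))\<close>, a function that vanishes at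
  \<open>y = -1\<close> and equals \<open>\<Phi>\<^sup>-(u)\<close> at \<open>y = 0\<close>. As \<open>1 + y \<le> 2\<close>, integrating from \<open>0\<close> to \<open>r = \<rho>(t)\<close> gives at
  most \<open>2 \<phi>(u)/u \<Phi>\<^sup>-(u \<surd>((1-r)/2))\<close>, pointwise in \<open>t\<close>. For the lower bound put \<open>s = \<surd>(2(2-\<delta>))\<close>, so that
  \<open>2 - \<delta> \<le> s < 2\<close>, and integrate only over \<open>y \<ge> s - 1\<close>, where \<open>1 + y \<ge> s\<close>: this gives
  \<open>s \<phi>(u)/u (\<Phi>\<^sup>-(u \<surd>((1-r)/(2-\<delta>))) - \<Phi>\<^sup>-(\<eta> u))\<close> with \<open>\<eta> = \<surd>((2-s)/s) > 0\<close>, up to an error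
  \<open>\<phi>(u) \<Phi>\<^sup>-(u)/u\<close>. After integration over the cube these errors are negligible: \<open>1 - \<rho>(t) = O(\<parallel>t\<parallel>\<^sup>\<alpha>)\<close>
  keeps the integrand \<open>\<Phi>\<^sup>-(u \<surd>((1-\<rho>(t))/(2-\<delta>)))\<close> bounded below on a cube of side \<open>u\<^bsup>-2/\<alpha>\<^esup>\<close>, so its
  integral decays only polynomially in \<open>u\<close>, while \<open>\<Phi>\<^sup>-(\<eta> u)\<close> decays like a Gaussian. The factors
  \<open>\<surd>(2/(2-\<delta>)) > 1\<close> and \<open>s\<close> finally absorb the asymptotic equivalence defining \<open>B\<close>.\<close>

lemma std_phi_pos: "0 < std_phi x"
  by (simp add: std_phi_def)

lemma isCont_std_phi: "isCont std_phi x"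
  unfolding std_phi_def by (intro continuous_intros) auto

lemma DERIV_std_phi: "DERIV std_phi x :> - x * std_phi x"
  unfolding std_phi_def by (auto intro!: derivative_eq_intros simp: field_simps power2_eq_square)

lemma integrable_std_phi: "integrable lborel std_phi"
proof -
  have "std_phi = std_normal_density"
    by (auto simp: std_phi_def std_normal_density_def)
  then show ?thesis
    using integrable_std_normal_moment[of 0] by simp
qed

lemma set_integrable_std_phi: "A \<in> sets lborel \<Longrightarrow> set_integrable lborel A std_phi"
  unfolding set_integrable_def using integrable_std_phi by (intro integrable_mult_indicator)

lemma Phi_bar_eq_interval_integral: "Phi_bar x = (LBINT s=ereal x..\<infinity>. std_phi s)"
proof -
  have "(LBINT s=ereal x..\<infinity>. std_phi s) = (LINT s:{x<..}|lborel. std_phi s)"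
    by (rule interval_integral_to_infinity_eq)
  also have "\<dots> = Phi_bar x"
    unfolding Phi_bar_def by (rule set_integral_discrete_difference[where X="{x}"]) auto
  finally show ?thesis ..
qed

lemma DERIV_Phi_bar: "DERIV Phi_bar x :> - std_phi x"
proof -
  have int: "interval_lebesgue_integrable lborel a b std_phi" for a b
    unfolding interval_lebesgue_integrable_def by (auto intro!: set_integrable_std_phi)
  have split: "Phi_bar y = (LBINT s=y..z. std_phi s) + Phi_bar z" for y z
    unfolding Phi_bar_eq_interval_integral by (rule interval_integral_sum[symmetric]) (rule int)
  have Phi_bar_eq: "Phi_bar y = Phi_bar 0 - (LBINT s=ereal 0..ereal y. std_phi s)" for y
    using split[of y 0] interval_integral_endpoints_reverse[of "ereal y" "ereal 0" std_phi]
    by simp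
  define a where "a = min x 0 - 1"
  define b where "b = max x 0 + 1"
  have "((\<lambda>y. LBINT s=ereal 0..ereal y. std_phi s) has_vector_derivative std_phi x) (at x within {a..b})"
    by (rule interval_integral_FTC2) (auto simp: a_def b_def intro!: continuous_intros isCont_std_phi
        continuous_at_imp_continuous_on)
  then have "((\<lambda>y. LBINT s=ereal 0..ereal y. std_phi s) has_real_derivative std_phi x) (at x)"
    by (simp add: at_within_Icc_at a_def b_def has_real_derivative_iff_has_vector_derivative)
  then have "DERIV (\<lambda>y. Phi_bar 0 - (LBINT s=ereal 0..ereal y. std_phi s)) x :> - std_phi x"
    by (auto intro!: derivative_eq_intros)
  then show ?thesis
    by (simp add: Phi_bar_eq[symmetric])
qed

lemma isCont_Phi_bar: "isCont Phi_bar x"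
  using DERIV_Phi_bar DERIV_isCont by blast

lemma continuous_on_Phi_bar [continuous_intros]: "continuous_on A Phi_bar"
  by (simp add: continuous_at_imp_continuous_on isCont_Phi_bar)

lemma borel_measurable_Phi_bar [measurable]: "Phi_bar \<in> borel_measurable borel"
  by (rule borel_measurable_continuous_onI) (rule continuous_on_Phi_bar)

lemma Phi_bar_antimono: "x \<le> y \<Longrightarrow> Phi_bar y \<le> Phi_bar x"
  by (rule DERIV_nonpos_imp_nonincreasing) (auto intro!: DERIV_Phi_bar less_imp_le std_phi_pos)

lemma Phi_bar_pos: "0 < Phi_bar x"
proof -
  have "Phi_bar (x + 1) < Phi_bar x"
    by (rule DERIV_neg_imp_decreasing) (auto intro!: DERIV_Phi_bar std_phi_pos)
  moreover have "0 \<le> Phi_bar (x + 1)"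
    unfolding Phi_bar_def set_lebesgue_integral_def
    by (intro integral_nonneg_AE AE_I2) (auto simp: indicator_def intro!: less_imp_le[OF std_phi_pos])
  ultimately show ?thesis by linarith
qed

lemma Phi_bar_nonneg: "0 \<le> Phi_bar x"
  using Phi_bar_pos less_imp_le by blast

text \<open>Mills' ratio bound: on \<open>[x, \<infinity>)\<close> we have \<open>\<phi> \<le> s \<phi>(s) / x\<close>, and \<open>-\<phi>/x\<close> is an antiderivative
  of the right-hand side.\<close>
lemma Phi_bar_le_std_phi_div:
  assumes "0 < x"
  shows "Phi_bar x \<le> std_phi x / x"
proof -
  let ?f = "\<lambda>s. s * std_phi s / x"
  let ?F = "\<lambda>s. - std_phi s / x"
  have "\<And>s. DERIV ?F s :> ?f s"
    using assms by (auto intro!: derivative_eq_intros DERIV_std_phi)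
  moreover have "\<And>s. isCont ?f s"
    using assms by (auto intro!: continuous_intros isCont_std_phi)
  moreover have "AE s in lborel. ereal x < ereal s \<longrightarrow> ereal s < \<infinity> \<longrightarrow> 0 \<le> ?f s"
    using assms by (auto intro!: AE_I2 divide_nonneg_pos mult_nonneg_nonneg less_imp_le[OF std_phi_pos])
  moreover have "((?F \<circ> real_of_ereal) \<longlongrightarrow> ?F x) (at_right (ereal x))"
    unfolding ereal_tendsto_simps1
    using assms by (intro tendsto_intros isCont_tendsto_compose[OF isCont_std_phi] tendsto_ident_at) auto
  moreover have "((?F \<circ> real_of_ereal) \<longlongrightarrow> 0) (at_left \<infinity>)"
    unfolding ereal_tendsto_simps1 std_phi_def using assms by real_asymp
  ultimately have f_int: "set_integrable lborel (einterval x \<infinity>) ?f"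
    and f_eq: "(LBINT s=ereal x..\<infinity>. ?f s) = std_phi x / x"
    using interval_integral_FTC_nonneg[of x \<infinity> ?F ?f] by auto
  have "Phi_bar x = (LINT s:einterval x \<infinity>|lborel. std_phi s)"
    by (simp add: Phi_bar_eq_interval_integral interval_lebesgue_integral_def)
  also have "\<dots> \<le> (LINT s:einterval x \<infinity>|lborel. ?f s)"
  proof (rule set_integral_mono[OF set_integrable_std_phi f_int])
    fix s assume "s \<in> einterval (ereal x) \<infinity>"
    then show "std_phi s \<le> ?f s"
      using assms std_phi_pos[of s] by (simp add: einterval_iff field_simps)
  qed auto
  also have "\<dots> = std_phi x / x"
    using f_eq by (simp add: interval_lebesgue_integral_def)
  finally show ?thesis .
qed

lemma Phi_bar_tendsto_0: "(Phi_bar \<longlongrightarrow> 0) at_top"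
proof (rule tendsto_sandwich[of "\<lambda>_. 0" _ _ "\<lambda>x. std_phi x / x"])
  show "eventually (\<lambda>x. Phi_bar x \<le> std_phi x / x) at_top"
    using eventually_gt_at_top[of 0] by eventually_elim (rule Phi_bar_le_std_phi_div)
  show "((\<lambda>x. std_phi x / x) \<longlongrightarrow> 0) at_top"
    unfolding std_phi_def by real_asymp
qed (simp_all add: Phi_bar_nonneg)

lemma Phi_bar_smallo_powr:
  assumes "0 < \<eta>"
  shows "(\<lambda>u. Phi_bar (u * \<eta>)) \<in> o[at_top](\<lambda>u. u powr q)"
proof (rule landau_o.big_small_trans)
  show "(\<lambda>u. Phi_bar (u * \<eta>)) \<in> O[at_top](\<lambda>u. std_phi (u * \<eta>) / (u * \<eta>))"
  proof (rule bigoI[where c=1])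
    show "eventually (\<lambda>u. norm (Phi_bar (u * \<eta>)) \<le> 1 * norm (std_phi (u * \<eta>) / (u * \<eta>))) at_top"
      using eventually_gt_at_top[of 0]
    proof eventually_elim
      case (elim u)
      then have "Phi_bar (u * \<eta>) \<le> std_phi (u * \<eta>) / (u * \<eta>)"
        using assms by (intro Phi_bar_le_std_phi_div) simp
      then show ?case
        using elim assms by (simp add: Phi_bar_nonneg abs_of_pos std_phi_pos)
    qed
  qed
  show "(\<lambda>u. std_phi (u * \<eta>) / (u * \<eta>)) \<in> o[at_top](\<lambda>u. u powr q)"
    using assms unfolding std_phi_def by real_asymp
qed

text \<open>\<open>corr_tail u\<close> is extended by its limit \<open>0\<close> for \<open>y \<le> -1\<close> so that the fundamental theorem of
  calculus applies on intervals with left end point \<open>-1\<close>.\<close>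

definition corr_arg :: "real \<Rightarrow> real \<Rightarrow> real" where
  "corr_arg u y = u * sqrt ((1 - y) / (1 + y))"

definition corr_tail :: "real \<Rightarrow> real \<Rightarrow> real" where
  "corr_tail u y = (if y \<le> -1 then 0 else Phi_bar (corr_arg u y))"

definition corr_tail_deriv :: "real \<Rightarrow> real \<Rightarrow> real" where
  "corr_tail_deriv u y = std_phi (corr_arg u y) * u / ((1 + y) * sqrt (1 - y\<^sup>2))"

lemma sqrt_one_minus_square_pos: "-1 < y \<Longrightarrow> y < 1 \<Longrightarrow> 0 < sqrt (1 - y\<^sup>2)"
  by (simp add: abs_square_less_1)

lemma DERIV_corr_arg:
  assumes "-1 < y" "y < 1"
  shows "DERIV (corr_arg u) y :> - u / ((1 + y) * sqrt (1 - y\<^sup>2))"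
proof -
  have sqrt_eq: "sqrt ((1 - y) / (1 + y)) = sqrt (1 - y\<^sup>2) / (1 + y)"
  proof -
    have "sqrt (1 - y\<^sup>2) = sqrt (1 - y) * sqrt (1 + y)"
      by (simp add: real_sqrt_mult[symmetric] algebra_simps power2_eq_square)
    moreover have "sqrt (1 + y) * sqrt (1 + y) = 1 + y"
      using assms by simp
    ultimately show ?thesis
      using assms by (simp add: real_sqrt_divide field_simps)
  qed
  have "DERIV (\<lambda>y. (1 - y) / (1 + y)) y :> -2 / (1 + y)\<^sup>2"
    using assms by (auto intro!: derivative_eq_intros simp: field_simps power2_eq_square)
  from DERIV_cmult[OF DERIV_chain2[OF DERIV_real_sqrt this], of u]
  have "DERIV (corr_arg u) y :> u * (inverse (sqrt ((1 - y) / (1 + y))) / 2 * (-2 / (1 + y)\<^sup>2))"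
    using assms by (simp add: corr_arg_def[abs_def])
  also have "u * (inverse (sqrt ((1 - y) / (1 + y))) / 2 * (-2 / (1 + y)\<^sup>2))
      = - u / ((1 + y) * sqrt (1 - y\<^sup>2))"
  proof -
    have "\<And>S t. 0 < S \<Longrightarrow> 0 < t \<Longrightarrow> u * (t / S / 2 * (-2 / t\<^sup>2)) = - u / (t * S)"
      by (simp add: field_simps power2_eq_square)
    from this[OF sqrt_one_minus_square_pos[OF assms], of "1 + y"] assms
    show ?thesis by (simp add: sqrt_eq)
  qed
  finally show ?thesis .
qed

lemma DERIV_corr_tail:
  assumes "-1 < y" "y < 1"
  shows "DERIV (corr_tail u) y :> corr_tail_deriv u y"
proof -
  have "DERIV (\<lambda>y. Phi_bar (corr_arg u y)) y :> corr_tail_deriv u y"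
    using DERIV_chain2[OF DERIV_Phi_bar DERIV_corr_arg[OF assms]] by (simp add: corr_tail_deriv_def)
  then show ?thesis
    by (rule has_field_derivative_transform_within_open[where S="{-1<..}"])
       (use assms in \<open>auto simp: corr_tail_def\<close>)
qed

lemma corr_tail_tendsto:
  assumes "-1 < y"
  shows "(corr_tail u \<longlongrightarrow> corr_tail u y) (at y)"
proof -
  have "isCont (corr_arg u) y"
    unfolding corr_arg_def using assms by (intro continuous_intros) auto
  then have "((\<lambda>z. Phi_bar (corr_arg u z)) \<longlongrightarrow> Phi_bar (corr_arg u y)) (at y)"
    by (intro isCont_tendsto_compose[OF isCont_Phi_bar]) (simp add: isCont_def)
  moreover have "eventually (\<lambda>z. Phi_bar (corr_arg u z) = corr_tail u z) (at y)"
    using assms eventually_at_topological[of _ y]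
    by (auto simp: corr_tail_def intro!: exI[of _ "{-1<..}"])
  ultimately show ?thesis
    using assms by (auto simp: corr_tail_def intro: Lim_transform_eventually)
qed

lemma corr_tail_tendsto_minus_one:
  assumes "0 < u"
  shows "(corr_tail u \<longlongrightarrow> 0) (at_right (-1))"
proof -
  have "filterlim (corr_arg u) at_top (at_right (-1))"
    unfolding corr_arg_def using assms by real_asymp
  then have "((\<lambda>z. Phi_bar (corr_arg u z)) \<longlongrightarrow> 0) (at_right (-1))"
    by (rule filterlim_compose[OF Phi_bar_tendsto_0])
  moreover have "eventually (\<lambda>z. Phi_bar (corr_arg u z) = corr_tail u z) (at_right (-1))"
    using eventually_at_right_less[of "-1::real"] by eventually_elim (simp add: corr_tail_def)
  ultimately show ?thesis
    by (rule Lim_transform_eventually)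
qed

lemma corr_tail_nonneg: "0 \<le> corr_tail u y"
  by (simp add: corr_tail_def Phi_bar_nonneg)

lemma corr_tail_deriv_nonneg:
  "0 \<le> u \<Longrightarrow> -1 < y \<Longrightarrow> y < 1 \<Longrightarrow> 0 \<le> corr_tail_deriv u y"
  using sqrt_one_minus_square_pos[of y] std_phi_pos[of "corr_arg u y"]
  by (auto simp: corr_tail_deriv_def intro!: divide_nonneg_pos mult_nonneg_nonneg mult_pos_pos)

lemma isCont_corr_tail_deriv:
  assumes "-1 < y" "y < 1"
  shows "isCont (corr_tail_deriv u) y"
  unfolding corr_tail_deriv_def corr_arg_def using assms sqrt_one_minus_square_pos[OF assms]
  by (intro continuous_intros isCont_o2[OF _ isCont_std_phi]) auto

lemma phi2_eq_corr_tail_deriv: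
  assumes "0 < u" "-1 < y" "y < 1"
  shows "phi2 u y = std_phi u / u * (1 + y) * corr_tail_deriv u y"
proof -
  have "(corr_arg u y)\<^sup>2 = u\<^sup>2 * (1 - y) / (1 + y)"
    using assms by (simp add: corr_arg_def power_mult_distrib)
  then have "std_phi u * std_phi (corr_arg u y) = exp (- (u\<^sup>2) / (1 + y)) / (2 * pi)"
    using assms by (simp add: std_phi_def exp_add[symmetric] field_simps)
  then show ?thesis
    using assms sqrt_one_minus_square_pos[OF assms(2,3)]
    by (simp add: phi2_def corr_tail_deriv_def)
qed

lemma phi2_nonneg: "-1 \<le> y \<Longrightarrow> y \<le> 1 \<Longrightarrow> 0 \<le> phi2 u y"
  by (simp add: phi2_def abs_square_le_1)

lemma borel_measurable_phi2 [measurable]: "phi2 u \<in> borel_measurable borel"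
  unfolding phi2_def by measurable

lemma corr_tail_deriv_interval_integral:
  assumes "0 < u" "-1 \<le> p" "p < q" "q \<le> 1"
  shows "set_integrable lborel (einterval p q) (corr_tail_deriv u)"
    and "(LBINT y=ereal p..ereal q. corr_tail_deriv u y) = corr_tail u q - corr_tail u p"
proof -
  have "\<And>y. ereal p < ereal y \<Longrightarrow> ereal y < ereal q \<Longrightarrow> DERIV (corr_tail u) y :> corr_tail_deriv u y"
    using assms by (auto intro!: DERIV_corr_tail)
  moreover have "\<And>y. ereal p < ereal y \<Longrightarrow> ereal y < ereal q \<Longrightarrow> isCont (corr_tail_deriv u) y"
    using assms by (auto intro!: isCont_corr_tail_deriv)
  moreover have "AE y in lborel. ereal p < ereal y \<longrightarrow> ereal y < ereal q \<longrightarrow> 0 \<le> corr_tail_deriv u y"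
    using assms by (auto intro!: AE_I2 corr_tail_deriv_nonneg)
  moreover have "((corr_tail u \<circ> real_of_ereal) \<longlongrightarrow> corr_tail u p) (at_right (ereal p))"
    unfolding ereal_tendsto_simps1
  proof (cases "p = -1")
    case True
    then show "(corr_tail u \<longlongrightarrow> corr_tail u p) (at_right p)"
      using corr_tail_tendsto_minus_one[OF assms(1)] by (simp add: corr_tail_def)
  next
    case False
    then show "(corr_tail u \<longlongrightarrow> corr_tail u p) (at_right p)"
      using assms by (intro tendsto_within_subset[OF corr_tail_tendsto]) auto
  qed
  moreover have "((corr_tail u \<circ> real_of_ereal) \<longlongrightarrow> corr_tail u q) (at_left (ereal q))"
    unfolding ereal_tendsto_simps1 using assms
    by (intro tendsto_within_subset[OF corr_tail_tendsto]) auto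
  ultimately show "set_integrable lborel (einterval p q) (corr_tail_deriv u)"
    and "(LBINT y=ereal p..ereal q. corr_tail_deriv u y) = corr_tail u q - corr_tail u p"
    using interval_integral_FTC_nonneg[of p q "corr_tail u" "corr_tail_deriv u"] assms by auto
qed

lemma phi2_interval_integral_bounds:
  assumes u: "0 < u" and pq: "-1 \<le> p" "p < q" "q \<le> 1"
    and mM: "\<And>y. p < y \<Longrightarrow> y < q \<Longrightarrow> m \<le> 1 + y \<and> 1 + y \<le> M"
  shows "set_integrable lborel (einterval p q) (phi2 u)"
    and "m * (std_phi u / u) * (corr_tail u q - corr_tail u p) \<le> (LBINT y=ereal p..ereal q. phi2 u y)"
    and "(LBINT y=ereal p..ereal q. phi2 u y) \<le> M * (std_phi u / u) * (corr_tail u q - corr_tail u p)"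
proof -
  define c where "c = std_phi u / u"
  have c: "0 < c"
    using u std_phi_pos[of u] by (simp add: c_def)
  note G = corr_tail_deriv_interval_integral[OF u pq]
  have bounds: "m * c * corr_tail_deriv u y \<le> phi2 u y \<and> phi2 u y \<le> M * c * corr_tail_deriv u y"
    if "y \<in> einterval p q" for y
  proof -
    from that pq have y: "-1 < y" "y < 1" "m \<le> 1 + y" "1 + y \<le> M"
      using mM by (auto simp: einterval_iff)
    then have "0 \<le> c * corr_tail_deriv u y"
      using c u by (simp add: corr_tail_deriv_nonneg)
    with y have "m * (c * corr_tail_deriv u y) \<le> (1 + y) * (c * corr_tail_deriv u y)"
      "(1 + y) * (c * corr_tail_deriv u y) \<le> M * (c * corr_tail_deriv u y)"
      by (simp_all add: mult_right_mono)
    then show ?thesis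
      unfolding phi2_eq_corr_tail_deriv[OF u y(1,2)] c_def[symmetric] by (simp add: mult_ac)
  qed
  have int_M: "set_integrable lborel (einterval p q) (\<lambda>y. M * c * corr_tail_deriv u y)"
    and int_m: "set_integrable lborel (einterval p q) (\<lambda>y. m * c * corr_tail_deriv u y)"
    using G(1) by (auto intro!: set_integrable_mult_right)
  show int: "set_integrable lborel (einterval p q) (phi2 u)"
  proof (rule set_integrable_bound[OF int_M])
    show "set_borel_measurable lborel (einterval p q) (phi2 u)"
      unfolding set_borel_measurable_def by measurable
    show "AE y in lborel. y \<in> einterval p q \<longrightarrow> norm (phi2 u y) \<le> norm (M * c * corr_tail_deriv u y)"
    proof (rule AE_I2, rule impI)
      fix y assume y: "y \<in> einterval p q"
      then have "0 \<le> phi2 u y"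
        using pq by (auto simp: einterval_iff intro!: phi2_nonneg)
      then show "norm (phi2 u y) \<le> norm (M * c * corr_tail_deriv u y)"
        using bounds[OF y] by simp
    qed
  qed
  have eq: "(LBINT y=ereal p..ereal q. f y) = (LINT y:einterval p q|lborel. f y)" for f
    using pq by (simp add: interval_lebesgue_integral_def)
  have "(LINT y:einterval p q|lborel. corr_tail_deriv u y) = corr_tail u q - corr_tail u p"
    using G(2) by (simp add: eq)
  moreover have "(LINT y:einterval p q|lborel. m * c * corr_tail_deriv u y) \<le> (LINT y:einterval p q|lborel. phi2 u y)"
    using bounds by (intro set_integral_mono[OF int_m int]) blast
  moreover have "(LINT y:einterval p q|lborel. phi2 u y) \<le> (LINT y:einterval p q|lborel. M * c * corr_tail_deriv u y)"
    using bounds by (intro set_integral_mono[OF int int_M]) blast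
  ultimately show "m * (std_phi u / u) * (corr_tail u q - corr_tail u p) \<le> (LBINT y=ereal p..ereal q. phi2 u y)"
    and "(LBINT y=ereal p..ereal q. phi2 u y) \<le> M * (std_phi u / u) * (corr_tail u q - corr_tail u p)"
    by (simp_all add: eq c_def)
qed

definition phi2_int :: "real \<Rightarrow> real \<Rightarrow> real" where
  "phi2_int u r = (LBINT y=ereal 0..ereal r. phi2 u y)"

lemma phi2_interval_integrable:
  assumes "0 < u" "-1 \<le> a" "a \<le> 1" "-1 \<le> b" "b \<le> 1"
  shows "interval_lebesgue_integrable lborel (ereal a) (ereal b) (phi2 u)"
proof -
  have "set_integrable lborel {-1<..<1} (phi2 u)"
    using phi2_interval_integral_bounds(1)[OF assms(1), of "-1" 1 0 2] by simp
  then show ?thesis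
    unfolding interval_lebesgue_integrable_def
    using assms by (auto elim!: set_integrable_subset simp: einterval_iff)
qed

lemma phi2_interval_integral_nonneg:
  assumes "-1 \<le> a" "a \<le> b" "b \<le> 1"
  shows "0 \<le> (LBINT y=ereal a..ereal b. phi2 u y)"
  using assms unfolding interval_lebesgue_integral_def set_lebesgue_integral_def
  by (auto intro!: integral_nonneg_AE AE_I2 phi2_nonneg simp: einterval_iff indicator_def)

lemma phi2_int_add:
  assumes "0 < u" "-1 \<le> r" "r \<le> 1" "-1 \<le> s" "s \<le> 1"
  shows "phi2_int u s = phi2_int u r + (LBINT y=ereal r..ereal s. phi2 u y)"
  unfolding phi2_int_def
  by (rule interval_integral_sum[symmetric])
     (use assms in \<open>auto intro!: phi2_interval_integrable simp: min_def max_def\<close>)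

lemma phi2_int_mono:
  assumes "0 < u" "-1 \<le> r" "r \<le> s" "s \<le> 1"
  shows "phi2_int u r \<le> phi2_int u s"
  using phi2_int_add[of u r s] phi2_interval_integral_nonneg[of r s u] assms by auto

lemma phi2_int_0 [simp]: "phi2_int u 0 = 0"
  by (simp add: phi2_int_def zero_ereal_def[symmetric])

lemma phi2_int_upper:
  assumes u: "0 < u" and r: "-1 \<le> r" "r \<le> 1"
  shows "phi2_int u r \<le> 2 * (std_phi u / u) * Phi_bar (u * sqrt ((1 - r) / 2))"
proof -
  have c: "0 < std_phi u / u"
    using u std_phi_pos[of u] by simp
  show ?thesis
  proof (cases "r \<le> 0")
    case True
    have "0 \<le> 2 * (std_phi u / u) * Phi_bar (u * sqrt ((1 - r) / 2))"
      using c Phi_bar_nonneg by (intro mult_nonneg_nonneg) auto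
    then show ?thesis
      using phi2_int_mono[OF u r(1) True] by simp
  next
    case False
    have "phi2_int u r \<le> 2 * (std_phi u / u) * (corr_tail u r - corr_tail u 0)"
      using phi2_interval_integral_bounds(3)[OF u, of 0 r 0 2] r False by (simp add: phi2_int_def)
    also have "\<dots> \<le> 2 * (std_phi u / u) * corr_tail u r"
      using c corr_tail_nonneg[of u 0] by (intro mult_left_mono) auto
    also have "\<dots> \<le> 2 * (std_phi u / u) * Phi_bar (u * sqrt ((1 - r) / 2))"
    proof -
      have "(1 - r) / 2 \<le> (1 - r) / (1 + r)"
        using r False by (intro divide_left_mono) auto
      then have "corr_tail u r \<le> Phi_bar (u * sqrt ((1 - r) / 2))"
        using u False
        by (auto simp: corr_tail_def corr_arg_def intro!: Phi_bar_antimono mult_left_mono real_sqrt_le_mono)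
      then show ?thesis
        using c by (intro mult_left_mono) auto
    qed
    finally show ?thesis .
  qed
qed

lemma phi2_int_ge_neg_Phi_bar:
  assumes u: "0 < u" and r: "-1 \<le> r" "r \<le> 1"
  shows "- (std_phi u / u * Phi_bar u) \<le> phi2_int u r"
proof -
  have c: "0 < std_phi u / u"
    using u std_phi_pos[of u] by simp
  show ?thesis
  proof (cases "r < 0")
    case True
    have "(LBINT y=ereal r..ereal 0. phi2 u y) \<le> std_phi u / u * (corr_tail u 0 - corr_tail u r)"
      using phi2_interval_integral_bounds(3)[OF u r(1) True, of 0 1] r by simp
    also have "\<dots> \<le> std_phi u / u * Phi_bar u"
      using c corr_tail_nonneg[of u r] by (intro mult_left_mono) (auto simp: corr_tail_def corr_arg_def)
    finally show ?thesis
      using phi2_int_add[OF u r, of 0] by simp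
  next
    case False
    then have "0 \<le> phi2_int u r"
      using phi2_int_mono[OF u, of 0 r] r by simp
    moreover have "0 \<le> std_phi u / u * Phi_bar u"
      using c Phi_bar_nonneg less_imp_le by (blast intro: mult_nonneg_nonneg)
    ultimately show ?thesis
      by linarith
  qed
qed

lemma phi2_int_lower:
  assumes u: "0 < u" and r: "-1 \<le> r" "r \<le> 1" and s: "1 < s" "s < 2"
    and k: "0 < k" "k \<le> s"
  shows "s * (std_phi u / u) * (Phi_bar (u * sqrt ((1 - r) / k)) - Phi_bar (u * sqrt ((2 - s) / s)))
           - (std_phi u / u) * Phi_bar u \<le> phi2_int u r"
proof -
  define c where "c = std_phi u / u"
  define a where "a = s - 1"
  have c: "0 < c"
    using u std_phi_pos[of u] by (simp add: c_def)
  have a: "0 < a" "a < 1" "1 + a = s"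
    using s by (auto simp: a_def)
  have threshold: "Phi_bar (u * sqrt ((2 - s) / s)) = corr_tail u a"
    using a by (simp add: corr_tail_def corr_arg_def a_def)
  consider "r \<le> a" | "a < r"
    by linarith
  then show ?thesis
  proof cases
    case 1
    have "(2 - s) / s \<le> (1 - r) / s"
      using 1 s by (intro divide_right_mono) (auto simp: a_def)
    also have "\<dots> \<le> (1 - r) / k"
      using 1 a k by (intro divide_left_mono) auto
    finally have "Phi_bar (u * sqrt ((1 - r) / k)) \<le> corr_tail u a"
      unfolding threshold[symmetric] using u
      by (intro Phi_bar_antimono mult_left_mono real_sqrt_le_mono) auto
    then have "s * c * (Phi_bar (u * sqrt ((1 - r) / k)) - corr_tail u a) \<le> 0"
      using c s by (intro mult_nonneg_nonpos) auto
    then show ?thesis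
      using phi2_int_ge_neg_Phi_bar[OF u r] by (simp add: c_def threshold)
  next
    case 2
    have "\<And>y. a < y \<Longrightarrow> y < r \<Longrightarrow> s \<le> 1 + y \<and> 1 + y \<le> 2"
      using a r by auto
    from phi2_interval_integral_bounds(2)[OF u _ 2 r(2) this]
    have "s * c * (corr_tail u r - corr_tail u a) \<le> (LBINT y=ereal a..ereal r. phi2 u y)"
      using a by (simp add: c_def)
    moreover have "0 \<le> phi2_int u a"
      using phi2_int_mono[OF u, of 0 a] a by simp
    moreover have "Phi_bar (u * sqrt ((1 - r) / k)) \<le> corr_tail u r"
    proof -
      have "(1 - r) / (1 + r) \<le> (1 - r) / k"
        using 2 a k r by (intro divide_left_mono) auto
      then show ?thesis
        using 2 a u by (auto simp: corr_tail_def corr_arg_def intro!: Phi_bar_antimono mult_left_mono)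
    qed
    ultimately have "s * c * (Phi_bar (u * sqrt ((1 - r) / k)) - corr_tail u a) \<le> phi2_int u r"
      using phi2_int_add[OF u _ _ r, of a] a c s
      by (smt (verit) mult_left_mono mult_pos_pos)
    moreover have "0 \<le> c * Phi_bar u"
      using c Phi_bar_nonneg less_imp_le by (blast intro: mult_nonneg_nonneg)
    ultimately show ?thesis
      by (simp add: c_def threshold)
  qed
qed

lemma stationary_gaussian_field_cov:
  assumes "stationary_gaussian_field M X \<rho>"
  shows "\<bar>\<rho> t\<bar> \<le> 1" and "\<rho> 0 = 1"
proof -
  have gauss: "\<And>S a. finite S \<Longrightarrow> gaussian_rv M (\<lambda>\<omega>. \<Sum>t\<in>S. a t * X t \<omega>)"
    and sq: "\<And>t. integral\<^sup>L M (\<lambda>\<omega>. (X t \<omega>)\<^sup>2) = 1"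
    and cov: "\<And>s t. integral\<^sup>L M (\<lambda>\<omega>. X s \<omega> * X t \<omega>) = \<rho> (s - t)"
    using assms unfolding stationary_gaussian_field_def by auto
  have [measurable]: "X t \<in> borel_measurable M" for t
    using gauss[of "{t}" "\<lambda>_. 1"]
    by (auto simp: gaussian_rv_def dest: distributed_measurable)
  have int_sq: "integrable M (\<lambda>\<omega>. (X t \<omega>)\<^sup>2)" for t
    using sq[of t] not_integrable_integral_eq by fastforce
  have int_prod: "integrable M (\<lambda>\<omega>. X s \<omega> * X t \<omega>)" for s t
  proof (rule Bochner_Integration.integrable_bound[OF Bochner_Integration.integrable_add[OF int_sq int_sq]])
    show "AE \<omega> in M. norm (X s \<omega> * X t \<omega>) \<le> norm ((X s \<omega>)\<^sup>2 + (X t \<omega>)\<^sup>2)"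
    proof (rule AE_I2)
      fix \<omega>
      have "2 * \<bar>X s \<omega>\<bar> * \<bar>X t \<omega>\<bar> \<le> (X s \<omega>)\<^sup>2 + (X t \<omega>)\<^sup>2"
        using sum_squares_ge_zero[of "\<bar>X s \<omega>\<bar> - \<bar>X t \<omega>\<bar>" 0]
        by (simp add: power2_eq_square algebra_simps)
      moreover have "0 \<le> \<bar>X s \<omega>\<bar> * \<bar>X t \<omega>\<bar>"
        by simp
      ultimately have "\<bar>X s \<omega>\<bar> * \<bar>X t \<omega>\<bar> \<le> (X s \<omega>)\<^sup>2 + (X t \<omega>)\<^sup>2"
        by linarith
      then show "norm (X s \<omega> * X t \<omega>) \<le> norm ((X s \<omega>)\<^sup>2 + (X t \<omega>)\<^sup>2)"
        by (simp add: abs_mult)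
    qed
  qed measurable
  have "0 \<le> 2 + 2 * e * \<rho> t" if "e = 1 \<or> e = -1" for e
  proof -
    have "(\<lambda>\<omega>. (X t \<omega> + e * X 0 \<omega>)\<^sup>2) = (\<lambda>\<omega>. (X t \<omega>)\<^sup>2 + (X 0 \<omega>)\<^sup>2 + (2 * e) * (X t \<omega> * X 0 \<omega>))"
      using that by (auto simp: power2_eq_square algebra_simps)
    moreover have "0 \<le> integral\<^sup>L M (\<lambda>\<omega>. (X t \<omega> + e * X 0 \<omega>)\<^sup>2)"
      by (rule integral_nonneg_AE) simp
    ultimately show ?thesis
      using int_sq int_prod sq cov[of t 0] by simp
  qed
  from this[of 1] this[of "-1"] show "\<bar>\<rho> t\<bar> \<le> 1"
    by auto
  show "\<rho> 0 = 1"
    using cov[of 0 0] sq[of 0] by (simp add: power2_eq_square)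
qed

lemma set_integrable_bounded_cbox:
  fixes f :: "'d::euclidean_space \<Rightarrow> real"
  assumes "f \<in> borel_measurable lborel" "\<And>x. x \<in> cbox a b \<Longrightarrow> \<bar>f x\<bar> \<le> C"
  shows "set_integrable lborel (cbox a b) f"
  unfolding set_integrable_def
  by (rule integrableI_bounded_set_indicator[where B=C])
     (use assms emeasure_lborel_cbox_finite[of a b] in auto)

abbreviation centered_cube :: "real \<Rightarrow> 'a::euclidean_space set" where
  "centered_cube h \<equiv> cbox (- h *\<^sub>R One) (h *\<^sub>R One)"

lemma norm_le_in_centered_cube:
  fixes t :: "'d::euclidean_space"
  assumes "t \<in> centered_cube h"
  shows "norm t \<le> real DIM('d) * h"
proof -
  have "norm t \<le> (\<Sum>b\<in>Basis. \<bar>t \<bullet> b\<bar>)"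
    by (rule norm_le_l1)
  also have "\<dots> \<le> (\<Sum>b\<in>(Basis::'d set). h)"
    using assms by (intro sum_mono) (auto simp: mem_box inner_sum_left inner_Basis)
  finally show ?thesis
    by simp
qed

lemma measure_centered_cube:
  assumes "0 \<le> h"
  shows "measure lborel (centered_cube h :: 'd::euclidean_space set) = (2 * h) ^ DIM('d)"
proof -
  have "(\<Prod>b\<in>(Basis::'d set). (h *\<^sub>R One - (- h *\<^sub>R One)) \<bullet> b) = (\<Prod>b\<in>(Basis::'d set). 2 * h)"
    by (intro prod.cong) (simp_all add: inner_diff_left inner_add_left inner_sum_left inner_Basis)
  then show ?thesis
    using assms by (subst measure_lborel_cbox) auto
qed

lemma set_integral_ge_const_mult_measure:
  fixes f :: "'a \<Rightarrow> real"
  assumes f: "set_integrable M C f" and S: "S \<subseteq> C" "S \<in> sets M" "emeasure M S < \<infinity>"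
    and nonneg: "\<And>x. x \<in> C \<Longrightarrow> 0 \<le> f x" and ge: "\<And>x. x \<in> S \<Longrightarrow> P \<le> f x" and "0 \<le> P"
  shows "P * measure M S \<le> (LINT x:C|M. f x)"
proof -
  have restrict: "(\<lambda>x. indicator C x *\<^sub>R (indicator S x * P)) = (\<lambda>x. P * indicator S x)"
    using S by (auto simp: indicator_def fun_eq_iff)
  have "set_integrable M C (\<lambda>x. indicator S x * P)"
    unfolding set_integrable_def restrict using S by (intro integrable_mult_right integrable_real_indicator)
  then have "(LINT x:C|M. indicator S x * P) \<le> (LINT x:C|M. f x)"
    using nonneg ge \<open>0 \<le> P\<close> by (intro set_integral_mono[OF _ f]) (auto simp: indicator_def)
  moreover have "(LINT x:C|M. indicator S x * P) = P * measure M S"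
    unfolding set_lebesgue_integral_def restrict using S(2) by (simp add: sets.Int_space_eq2)
  ultimately show ?thesis
    by (cases "P = 0") (simp_all add: mult.commute)
qed

lemma asymp_equiv_powr_imp_local_bound:
  fixes \<rho> :: "'d::real_normed_vector \<Rightarrow> real"
  assumes "(\<lambda>t. 1 - \<rho> t) \<sim>[at 0] (\<lambda>t. c * norm t powr \<alpha>)" "\<rho> 0 = 1" "0 < c"
  shows "\<exists>d>0. \<forall>t. norm t < d \<longrightarrow> 1 - \<rho> t \<le> 2 * c * norm t powr \<alpha>"
proof -
  have "eventually (\<lambda>t. norm (1 - \<rho> t) \<le> 2 * norm (c * norm t powr \<alpha>)) (at 0)"
    using asymp_equiv_imp_eventually_le[OF assms(1)] by simp
  then obtain d where "0 < d"
    and d: "\<And>t. t \<noteq> 0 \<Longrightarrow> dist t 0 < d \<Longrightarrow> \<bar>1 - \<rho> t\<bar> \<le> 2 * c * norm t powr \<alpha>"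
    using assms(3) unfolding eventually_at by (auto simp: abs_mult mult.assoc)
  have "1 - \<rho> t \<le> 2 * c * norm t powr \<alpha>" if "norm t < d" for t
    using d[of t] that assms(2) by (cases "t = 0") (auto simp: dist_norm)
  with \<open>0 < d\<close> show ?thesis
    by blast
qed

lemma Phi_bar_smallo_of_powr_lower_bound:
  assumes "0 < \<eta>" "0 < P" "eventually (\<lambda>u. P * u powr q \<le> D u) at_top"
  shows "(\<lambda>u. Phi_bar (u * \<eta>)) \<in> o[at_top](D)"
proof (rule landau_o.small_big_trans[OF Phi_bar_smallo_powr[OF assms(1)]])
  show "(\<lambda>u. u powr q) \<in> O[at_top](D)"
  proof (rule bigoI[where c="1 / P"])
    show "eventually (\<lambda>u. norm (u powr q) \<le> 1 / P * norm (D u)) at_top"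
      using assms(3) eventually_gt_at_top[of 0]
      by eventually_elim (use assms(2) in \<open>auto simp: field_simps\<close>)
  qed
qed

lemma Limsup_ratio_le_one:
  fixes B I C :: "'a \<Rightarrow> real"
  assumes BI: "B \<sim>[F] I" and le: "eventually (\<lambda>x. I x \<le> C x) F"
    and pos: "eventually (\<lambda>x. 0 < C x) F" and K: "1 < K"
  shows "Limsup F (\<lambda>x. ereal (B x / (K * C x))) \<le> 1"
proof (rule Limsup_bounded)
  show "eventually (\<lambda>x. ereal (B x / (K * C x)) \<le> 1) F"
    using asymp_equiv_imp_eventually_le[OF BI K] asymp_equiv_eventually_same_sign[OF BI] le pos
  proof eventually_elim
    case (elim x)
    have "B x \<le> K * C x"
    proof (cases "B x \<le> 0")
      case False
      then have "0 < I x"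
        using elim(2) by (metis linorder_not_le sgn_greater)
      then have "B x \<le> K * I x"
        using elim(1) by simp
      also have "\<dots> \<le> K * C x"
        using elim(3) K by simp
      finally show ?thesis .
    qed (use elim K mult_pos_pos[of K "C x"] in linarith)
    then show ?case
      using elim K by simp
  qed
qed

lemma Liminf_ratio_ge_one:
  fixes B I D e :: "'a \<Rightarrow> real"
  assumes F: "F \<noteq> bot" and BI: "B \<sim>[F] I" and ge: "eventually (\<lambda>x. D x - e x \<le> I x) F"
    and pos: "eventually (\<lambda>x. 0 < D x) F" and e: "e \<in> o[F](D)"
  shows "1 \<le> Liminf F (\<lambda>x. ereal (B x / D x))"
proof -
  have e_lim: "((\<lambda>x. e x / D x) \<longlongrightarrow> 0) F"
    by (rule smalloD_tendsto[OF e])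
  have I_pos: "eventually (\<lambda>x. 0 < I x) F"
    using order_tendstoD(2)[OF e_lim zero_less_one] ge pos
    by eventually_elim (simp add: field_simps)
  have BI_lim: "((\<lambda>x. B x / I x) \<longlongrightarrow> 1) F"
    using I_pos by (intro asymp_equivD_strong[OF BI]) (auto elim: eventually_mono)
  have "eventually (\<lambda>x. B x / I x * (1 - e x / D x) \<le> B x / D x) F"
    using order_tendstoD(1)[OF BI_lim zero_less_one] I_pos ge pos
  proof eventually_elim
    case (elim x)
    have "1 - e x / D x \<le> I x / D x"
      using elim divide_right_mono[of "D x - e x" "I x" "D x"] by (simp add: diff_divide_distrib)
    then have "B x / I x * (1 - e x / D x) \<le> B x / I x * (I x / D x)"
      using elim(1) by (intro mult_left_mono) auto
    then show ?case
      using elim by simp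
  qed
  then have "Liminf F (\<lambda>x. ereal (B x / I x * (1 - e x / D x))) \<le> Liminf F (\<lambda>x. ereal (B x / D x))"
    by (intro Liminf_mono) (auto elim: eventually_mono)
  moreover have "((\<lambda>x. B x / I x * (1 - e x / D x)) \<longlongrightarrow> 1 * (1 - 0)) F"
    by (intro tendsto_mult tendsto_diff BI_lim e_lim tendsto_const)
  then have "Liminf F (\<lambda>x. ereal (B x / I x * (1 - e x / D x))) = 1"
    using F by (intro lim_imp_Liminf) (simp_all add: one_ereal_def)
  ultimately show ?thesis
    by simp
qed

lemma sqrt_two_mult_two_minus_bounds:
  fixes \<delta> :: real
  assumes "0 < \<delta>" "\<delta> < 1"
  shows "1 < sqrt (2 * (2 - \<delta>))" "sqrt (2 * (2 - \<delta>)) < 2" "2 - \<delta> \<le> sqrt (2 * (2 - \<delta>))"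
proof -
  show "1 < sqrt (2 * (2 - \<delta>))"
    using assms by (intro real_less_rsqrt) simp
  have "sqrt (2 * (2 - \<delta>)) < sqrt (2\<^sup>2)"
    using assms by (intro real_sqrt_less_mono) simp
  then show "sqrt (2 * (2 - \<delta>)) < 2"
    by simp
  have "\<delta> * \<delta> \<le> 2 * \<delta>"
    using assms by (intro mult_right_mono) auto
  then have "(2 - \<delta>)\<^sup>2 \<le> 2 * (2 - \<delta>)"
    by (simp add: power2_eq_square algebra_simps)
  then show "2 - \<delta> \<le> sqrt (2 * (2 - \<delta>))"
    by (rule real_le_rsqrt)
qed

context
  fixes \<rho> :: "'d::euclidean_space \<Rightarrow> real"
  assumes [measurable]: "\<rho> \<in> borel_measurable lborel" and \<rho>_bound: "\<And>t. \<bar>\<rho> t\<bar> \<le> 1"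
begin

lemma borel_measurable_phi2_int_comp:
  assumes u: "0 < u"
  shows "(\<lambda>t. phi2_int u (\<rho> t)) \<in> borel_measurable lborel"
proof -
  define h where "h r = phi2_int u (max (-1) (min 1 r))" for r
  have "mono h"
    unfolding h_def mono_def by (auto intro!: phi2_int_mono[OF u])
  then have [measurable]: "h \<in> borel_measurable borel"
    by (rule borel_measurable_mono)
  have "(\<lambda>t. h (\<rho> t)) \<in> borel_measurable lborel"
    by measurable
  moreover have "h (\<rho> t) = phi2_int u (\<rho> t)" for t
    using \<rho>_bound[of t] by (simp add: h_def abs_le_iff max_absorb2 min_absorb2)
  ultimately show ?thesis
    by simp
qed

lemma set_integrable_phi2_int_comp:
  assumes u: "0 < u"
  shows "set_integrable lborel (cbox a b) (\<lambda>t. phi2_int u (\<rho> t))"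
proof (rule set_integrable_bounded_cbox[OF borel_measurable_phi2_int_comp[OF u]])
  fix t
  have "phi2_int u (-1) \<le> phi2_int u (\<rho> t)" "phi2_int u (\<rho> t) \<le> phi2_int u 1"
    using \<rho>_bound[of t] by (auto simp: abs_le_iff intro!: phi2_int_mono[OF u])
  then show "\<bar>phi2_int u (\<rho> t)\<bar> \<le> \<bar>phi2_int u (-1)\<bar> + \<bar>phi2_int u 1\<bar>"
    by linarith
qed

lemma set_integrable_Phi_bar_comp:
  assumes "0 \<le> u" "0 < k"
  shows "set_integrable lborel (cbox a b) (\<lambda>t. Phi_bar (u * sqrt ((1 - \<rho> t) / k)))"
proof (rule set_integrable_bounded_cbox[where C="Phi_bar 0"])
  fix t
  have "0 \<le> u * sqrt ((1 - \<rho> t) / k)"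
    using assms \<rho>_bound[of t] by (auto simp: abs_le_iff)
  then show "\<bar>Phi_bar (u * sqrt ((1 - \<rho> t) / k))\<bar> \<le> Phi_bar 0"
    by (simp add: Phi_bar_antimono Phi_bar_nonneg)
qed measurable

lemma set_integral_phi2_int_upper:
  assumes u: "0 < u"
  shows "(LINT t:cbox a b|lborel. phi2_int u (\<rho> t))
           \<le> 2 * (std_phi u / u) * (LINT t:cbox a b|lborel. Phi_bar (u * sqrt ((1 - \<rho> t) / 2)))"
proof -
  have "(LINT t:cbox a b|lborel. phi2_int u (\<rho> t))
        \<le> (LINT t:cbox a b|lborel. 2 * (std_phi u / u) * Phi_bar (u * sqrt ((1 - \<rho> t) / 2)))"
    using \<rho>_bound u
    by (intro set_integral_mono set_integrable_phi2_int_comp set_integrable_mult_right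
        set_integrable_Phi_bar_comp phi2_int_upper) (auto simp: abs_le_iff)
  then show ?thesis
    by simp
qed

lemma set_integral_phi2_int_lower:
  assumes u: "0 < u" and s: "1 < s" "s < 2" and k: "0 < k" "k \<le> s"
  shows "s * (std_phi u / u) * (LINT t:cbox a b|lborel. Phi_bar (u * sqrt ((1 - \<rho> t) / k)))
           - measure lborel (cbox a b) * (std_phi u / u) * (s * Phi_bar (u * sqrt ((2 - s) / s)) + Phi_bar u)
         \<le> (LINT t:cbox a b|lborel. phi2_int u (\<rho> t))"
proof -
  define c where "c = std_phi u / u"
  define e where "e = c * (s * Phi_bar (u * sqrt ((2 - s) / s)) + Phi_bar u)"
  have int_Phi: "set_integrable lborel (cbox a b) (\<lambda>t. s * c * Phi_bar (u * sqrt ((1 - \<rho> t) / k)))"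
    using u k by (intro set_integrable_mult_right set_integrable_Phi_bar_comp) auto
  have int_e: "set_integrable lborel (cbox a b) (\<lambda>t. e)"
    by (rule set_integrable_bounded_cbox[where C="\<bar>e\<bar>"]) auto
  have "(LINT t:cbox a b|lborel. s * c * Phi_bar (u * sqrt ((1 - \<rho> t) / k)) - e)
        \<le> (LINT t:cbox a b|lborel. phi2_int u (\<rho> t))"
  proof (rule set_integral_mono[OF set_integral_diff(1)[OF int_Phi int_e] set_integrable_phi2_int_comp[OF u]])
    fix t
    show "s * c * Phi_bar (u * sqrt ((1 - \<rho> t) / k)) - e \<le> phi2_int u (\<rho> t)"
      using phi2_int_lower[OF u _ _ s k, of "\<rho> t"] \<rho>_bound[of t]
      by (simp add: c_def e_def abs_le_iff algebra_simps)
  qed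
  also have "(LINT t:cbox a b|lborel. s * c * Phi_bar (u * sqrt ((1 - \<rho> t) / k)) - e)
      = s * c * (LINT t:cbox a b|lborel. Phi_bar (u * sqrt ((1 - \<rho> t) / k))) - measure lborel (cbox a b) * e"
    using set_integral_diff(2)[OF int_Phi int_e] set_integral_const[of "cbox a b" lborel e]
      emeasure_lborel_cbox_finite[of a b]
    by simp
  finally show ?thesis
    by (simp add: c_def e_def algebra_simps)
qed

context
  fixes C \<alpha> d :: real
  assumes local_bound: "\<And>t. norm t < d \<Longrightarrow> 1 - \<rho> t \<le> C * norm t powr \<alpha>"
    and C: "0 \<le> C" and \<alpha>: "0 < \<alpha>"
begin

lemma Phi_bar_lower_on_small_cube:
  assumes u: "0 < u" and k: "0 < k" and small: "real DIM('d) * u powr (-2/\<alpha>) < d"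
    and t: "t \<in> centered_cube (u powr (-2/\<alpha>))"
  shows "Phi_bar (sqrt (C * real DIM('d) powr \<alpha> / k)) \<le> Phi_bar (u * sqrt ((1 - \<rho> t) / k))"
proof -
  define n where "n = real DIM('d)"
  define h where "h = u powr (-2/\<alpha>)"
  have n: "1 \<le> n"
    by (simp add: n_def DIM_positive Suc_le_eq)
  have "h powr \<alpha> = u powr (-2)"
    using \<alpha> by (simp add: h_def powr_powr)
  then have hu: "u\<^sup>2 * h powr \<alpha> = 1"
    using u by (simp add: powr_minus power2_eq_square divide_simps powr_realpow[symmetric]
        powr_add[symmetric] mult.commute)
  have "norm t \<le> n * h"
    using norm_le_in_centered_cube[OF t] by (simp add: n_def h_def)
  then have "1 - \<rho> t \<le> C * (n * h) powr \<alpha>"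
    using local_bound[of t] small C \<alpha> unfolding n_def h_def
    by (smt (verit) mult_left_mono powr_mono2 norm_ge_zero)
  then have "u\<^sup>2 * (1 - \<rho> t) / k \<le> u\<^sup>2 * (C * (n * h) powr \<alpha>) / k"
    using k by (intro divide_right_mono mult_left_mono) auto
  also have "u\<^sup>2 * (C * (n * h) powr \<alpha>) = C * n powr \<alpha> * (u\<^sup>2 * h powr \<alpha>)"
    using u n by (simp add: h_def powr_mult mult_ac)
  finally have "sqrt (u\<^sup>2 * ((1 - \<rho> t) / k)) \<le> sqrt (C * n powr \<alpha> / k)"
    unfolding hu by (intro real_sqrt_le_mono) simp
  moreover have "u * sqrt ((1 - \<rho> t) / k) = sqrt (u\<^sup>2 * ((1 - \<rho> t) / k))"
    using u by (subst real_sqrt_mult) simp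
  ultimately show ?thesis
    unfolding n_def by (metis Phi_bar_antimono)
qed

lemma Phi_bar_cube_integral_lower:
  assumes d: "0 < d" and \<epsilon>: "0 < \<epsilon>" and k: "0 < k"
  shows "\<exists>P>0. eventually (\<lambda>u. P * u powr (- 2 * real DIM('d) / \<alpha>)
           \<le> (LINT t:centered_cube \<epsilon>|lborel. Phi_bar (u * sqrt ((1 - \<rho> t) / k)))) at_top"
proof -
  define P0 where "P0 = Phi_bar (sqrt (C * real DIM('d) powr \<alpha> / k))"
  have "((\<lambda>u::real. u powr (-2/\<alpha>)) \<longlongrightarrow> 0) at_top"
    using \<alpha> by (intro tendsto_neg_powr filterlim_ident) simp
  then have "eventually (\<lambda>u. u powr (-2/\<alpha>) < \<epsilon> \<and> u powr (-2/\<alpha>) < d / real DIM('d)) at_top"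
    using \<epsilon> d by (intro eventually_conj order_tendstoD(2)) auto
  then have "eventually (\<lambda>u. P0 * 2 ^ DIM('d) * u powr (- 2 * real DIM('d) / \<alpha>)
      \<le> (LINT t:centered_cube \<epsilon>|lborel. Phi_bar (u * sqrt ((1 - \<rho> t) / k)))) at_top"
    using eventually_gt_at_top[of 0]
  proof eventually_elim
    case (elim u)
    define h where "h = u powr (-2/\<alpha>)"
    have h: "0 < h" "h < \<epsilon>" "real DIM('d) * h < d"
      using elim by (auto simp: h_def field_simps)
    have "centered_cube h \<subseteq> (centered_cube \<epsilon> :: 'd set)"
      using h by (intro subset_box_imp) (auto simp: inner_add_left inner_sum_left inner_Basis)
    then have "P0 * measure lborel (centered_cube h :: 'd set)
        \<le> (LINT t:centered_cube \<epsilon>|lborel. Phi_bar (u * sqrt ((1 - \<rho> t) / k)))"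
      using elim k h Phi_bar_nonneg less_imp_le[OF Phi_bar_pos]
      by (intro set_integral_ge_const_mult_measure set_integrable_Phi_bar_comp
          emeasure_lborel_cbox_finite) (auto simp: P0_def h_def intro: Phi_bar_lower_on_small_cube)
    moreover have "measure lborel (centered_cube h :: 'd set) = 2 ^ DIM('d) * h ^ DIM('d)"
      using h by (subst measure_centered_cube) (simp_all add: power_mult_distrib)
    moreover have "h ^ DIM('d) = u powr (- 2 * real DIM('d) / \<alpha>)"
      using elim by (simp add: h_def powr_realpow[symmetric] powr_powr)
    ultimately show ?case
      by (simp add: mult_ac)
  qed
  moreover have "0 < P0 * 2 ^ DIM('d)"
    by (simp add: P0_def Phi_bar_pos)
  ultimately show ?thesis
    by blast
qed

lemma eventually_Phi_bar_cube_integral_pos: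
  assumes "0 < d" "0 < \<epsilon>" "0 < k"
  shows "eventually (\<lambda>u. 0 < std_phi u / u * (LINT t:centered_cube \<epsilon>|lborel. Phi_bar (u * sqrt ((1 - \<rho> t) / k))))
           at_top"
proof -
  obtain P where P: "0 < P" and lower: "eventually (\<lambda>u. P * u powr (- 2 * real DIM('d) / \<alpha>)
      \<le> (LINT t:centered_cube \<epsilon>|lborel. Phi_bar (u * sqrt ((1 - \<rho> t) / k)))) at_top"
    using Phi_bar_cube_integral_lower[OF assms] by blast
  show ?thesis
    using lower eventually_gt_at_top[of 0]
  proof eventually_elim
    case (elim u)
    then have "0 < (LINT t:centered_cube \<epsilon>|lborel. Phi_bar (u * sqrt ((1 - \<rho> t) / k)))"
      using P by (smt (verit) powr_gt_zero mult_pos_pos)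
    then show ?case
      using elim std_phi_pos[of u] by simp
  qed
qed

lemma Limsup_phi2_cube_integral_le:
  assumes B: "B \<sim>[at_top] (\<lambda>u. LINT t:centered_cube \<epsilon>|lborel. phi2_int u (\<rho> t))"
    and d: "0 < d" and \<epsilon>: "0 < \<epsilon>" and K: "1 < K"
  shows "Limsup at_top (\<lambda>u. ereal (B u / (2 * K * (std_phi u / u) *
           (LINT t:centered_cube \<epsilon>|lborel. Phi_bar (u * sqrt ((1 - \<rho> t) / 2)))))) \<le> 1"
proof -
  have "Limsup at_top (\<lambda>u. ereal (B u / (K * (2 * (std_phi u / u) *
          (LINT t:centered_cube \<epsilon>|lborel. Phi_bar (u * sqrt ((1 - \<rho> t) / 2))))))) \<le> 1"
  proof (rule Limsup_ratio_le_one[OF B _ _ K])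
    show "eventually (\<lambda>u. (LINT t:centered_cube \<epsilon>|lborel. phi2_int u (\<rho> t))
        \<le> 2 * (std_phi u / u) * (LINT t:centered_cube \<epsilon>|lborel. Phi_bar (u * sqrt ((1 - \<rho> t) / 2)))) at_top"
      using eventually_gt_at_top[of 0] by eventually_elim (rule set_integral_phi2_int_upper)
    show "eventually (\<lambda>u. 0 < 2 * (std_phi u / u) *
        (LINT t:centered_cube \<epsilon>|lborel. Phi_bar (u * sqrt ((1 - \<rho> t) / 2)))) at_top"
      using eventually_Phi_bar_cube_integral_pos[OF d \<epsilon>, of 2] by (auto elim: eventually_mono)
  qed
  then show ?thesis
    by (simp add: mult_ac)
qed

lemma Liminf_phi2_cube_integral_ge:
  assumes B: "B \<sim>[at_top] (\<lambda>u. LINT t:centered_cube \<epsilon>|lborel. phi2_int u (\<rho> t))"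
    and d: "0 < d" and \<epsilon>: "0 < \<epsilon>" and s: "1 < s" "s < 2" and k: "0 < k" "k \<le> s"
  shows "1 \<le> Liminf at_top (\<lambda>u. ereal (B u / (s * (std_phi u / u) *
           (LINT t:centered_cube \<epsilon>|lborel. Phi_bar (u * sqrt ((1 - \<rho> t) / k))))))"
proof (rule Liminf_ratio_ge_one[OF _ B])
  define D where "D u = (LINT t:centered_cube \<epsilon>|lborel. Phi_bar (u * sqrt ((1 - \<rho> t) / k)))" for u
  define V where "V = measure lborel (centered_cube \<epsilon> :: 'd set)"
  define \<eta> where "\<eta> = sqrt ((2 - s) / s)"
  show "eventually (\<lambda>u. s * (std_phi u / u) * D u - V * (std_phi u / u) * (s * Phi_bar (u * \<eta>) + Phi_bar u)
      \<le> (LINT t:centered_cube \<epsilon>|lborel. phi2_int u (\<rho> t))) at_top"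
    using eventually_gt_at_top[of 0] unfolding D_def V_def \<eta>_def
    by eventually_elim (rule set_integral_phi2_int_lower[OF _ s k])
  have "0 < s"
    using s by simp
  moreover have "eventually (\<lambda>u. 0 < std_phi u / u * D u) at_top"
    using eventually_Phi_bar_cube_integral_pos[OF d \<epsilon> k(1)] by (simp add: D_def)
  ultimately show "eventually (\<lambda>u. 0 < s * (std_phi u / u) * D u) at_top"
    by (auto elim!: eventually_mono simp only: mult.assoc intro!: mult_pos_pos)
  obtain P where P: "0 < P" and lower: "eventually (\<lambda>u. P * u powr (- 2 * real DIM('d) / \<alpha>) \<le> D u) at_top"
    using Phi_bar_cube_integral_lower[OF d \<epsilon> k(1)] unfolding D_def by blast
  have "(\<lambda>u. Phi_bar (u * \<eta>)) \<in> o[at_top](D)"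
    using s by (intro Phi_bar_smallo_of_powr_lower_bound[OF _ P lower]) (simp add: \<eta>_def)
  moreover have "(\<lambda>u. Phi_bar (u * 1)) \<in> o[at_top](D)"
    by (rule Phi_bar_smallo_of_powr_lower_bound[OF _ P lower]) simp
  ultimately have "(\<lambda>u. s * Phi_bar (u * \<eta>) + Phi_bar u) \<in> o[at_top](D)"
    using s by (auto intro!: sum_in_smallo)
  moreover have "V \<noteq> 0"
    using \<epsilon> unfolding V_def by (subst measure_centered_cube) auto
  ultimately have "(\<lambda>u. std_phi u / u * (V * (s * Phi_bar (u * \<eta>) + Phi_bar u)))
      \<in> o[at_top](\<lambda>u. std_phi u / u * (s * D u))"
    using s by (intro landau_o.small.mult_left) simp
  then show "(\<lambda>u. V * (std_phi u / u) * (s * Phi_bar (u * \<eta>) + Phi_bar u))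
      \<in> o[at_top](\<lambda>u. s * (std_phi u / u) * D u)"
    by (simp add: mult_ac)
qed simp

end

end

theorem lemma6:
  fixes M :: "'w measure" and X :: "'d::euclidean_space \<Rightarrow> 'w \<Rightarrow> real"
    and \<rho> :: "'d \<Rightarrow> real" and B :: "real \<Rightarrow> real"
    and \<alpha> c \<epsilon> \<delta> :: real
  assumes field: "stationary_gaussian_field M X \<rho>"
    and integrable: "integrable lborel \<rho>"
    and alpha: "0 < \<alpha>" "\<alpha> \<le> 2" and c: "0 < c"
    and local: "(\<lambda>t. 1 - \<rho> t) \<sim>[at 0] (\<lambda>t. c * norm t powr \<alpha>)"
    and eps: "0 < \<epsilon>"
    and B: "B \<sim>[at_top] (\<lambda>u. LINT t:cbox (- \<epsilon> *\<^sub>R One) (\<epsilon> *\<^sub>R One)|lborel.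
                                 (LBINT y=0..\<rho> t. phi2 u y))"
    and delta: "0 < \<delta>" "\<delta> < 1"
  shows "(Limsup at_top (\<lambda>u. ereal (B u /
            (2 * sqrt (2 / (2 - \<delta>)) * (std_phi u / u) *
             (LINT t:cbox (- \<epsilon> *\<^sub>R One) (\<epsilon> *\<^sub>R One)|lborel.
                Phi_bar (u * sqrt ((1 - \<rho> t) / 2)))))) \<le> 1) \<and>
         (Liminf at_top (\<lambda>u. ereal (B u /
            (sqrt (2 * (2 - \<delta>)) * (std_phi u / u) *
             (LINT t:cbox (- \<epsilon> *\<^sub>R One) (\<epsilon> *\<^sub>R One)|lborel.
                Phi_bar (u * sqrt ((1 - \<rho> t) / (2 - \<delta>))))))) \<ge> 1)"
proof -
  have \<rho>_bound: "\<And>t. \<bar>\<rho> t\<bar> \<le> 1" and \<rho>0: "\<rho> 0 = 1"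
    using stationary_gaussian_field_cov[OF field] by auto
  have \<rho>_meas: "\<rho> \<in> borel_measurable lborel"
    using integrable by (rule borel_measurable_integrable)
  obtain d where d: "0 < d" "\<And>t. norm t < d \<Longrightarrow> 1 - \<rho> t \<le> 2 * c * norm t powr \<alpha>"
    using asymp_equiv_powr_imp_local_bound[OF local \<rho>0 c] by blast
  have B': "B \<sim>[at_top] (\<lambda>u. LINT t:centered_cube \<epsilon>|lborel. phi2_int u (\<rho> t))"
    using B unfolding phi2_int_def zero_ereal_def[symmetric] .
  have pos: "0 \<le> 2 * c" "0 < 2 - \<delta>" "1 < sqrt (2 / (2 - \<delta>))"
    using c delta by simp_all
  note s = sqrt_two_mult_two_minus_bounds[OF delta]
  from Limsup_phi2_cube_integral_le[OF \<rho>_meas \<rho>_bound d(2) pos(1) alpha(1) B' d(1) eps pos(3)]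
    Liminf_phi2_cube_integral_ge[OF \<rho>_meas \<rho>_bound d(2) pos(1) alpha(1) B' d(1) eps s(1,2) pos(2) s(3)]
  show ?thesis ..
qed

end
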